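(* Let $Z_1, Z_2, \ldots$ be i.i.d. from a distribution $\mathcal{D}$ on a set $\mathbb{Z}$, let $\ell:\Theta\times\mathbb{Z}\to[0,\infty)$ be a loss function with risk $R(\theta)=\mathbb{E}_{Z\sim\mathcal{D}}\{\ell(\theta;Z)\}$ and risk minimizer $\theta^*=\arg\min_{\theta\in\Theta}R(\theta)$. Suppose the strong central condition holds with learning rate $\bar\omega>0$. For $k\ge 1$ let $\widehat\theta_k$ be any almost-empirical-risk-minimizer (AERM) computed from $Z^k=(Z_1,\ldots,Z_k)$, let $\widehat\theta_0\in\Theta$ be a fixed constant, and for $\omega\ge 0$ define the online GUe-value $$G_{n,\mathrm{on}}(\theta)=\exp\Bigl[-\omega\sum_{i=1}^n\{\ell(\widehat\theta_{i-1};Z_i)-\ell(\theta;Z_i)\}\Bigr].$$ If $\omega\in[0,\bar\omega)$, then $(G_{n,\mathrm{on}}(\theta^* ))_{n\in\mathbb{N}}$ is an e-process.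
   Context: The empirical risk is $\widehat R_n(\theta)=n^{-1}\sum_{i=1}^n\ell(\theta;Z_i)$. For fixed constants $\varepsilon,\delta\ge0$, an $(\varepsilon,\delta)$-AERM based on $Z^n$ is an estimator $\widehat\theta_n$ (a measurable function of $Z^n$) with $\widehat R_n(\widehat\theta_n)\le\inf_{\theta\in\Theta}\widehat R_n(\theta)+\delta/n^{1+\varepsilon}$; an AERM is an $(\varepsilon,\delta)$-AERM for some such constants. Strong central condition with learning rate $\bar\omega>0$: $\mathbb{E}_{Z\sim\mathcal{D}}\exp[-\omega\{\ell(\theta;Z)-\ell(\theta^*;Z)\}]\le1$ for all $\theta\in\Theta$ and all $\omega\in[0,\bar\omega)$. An e-process is a non-negative supermartingale $(E_n)_{n\in\mathbb{N}}$ (with respect to the filtration generated by the data) such that $\mathbb{E}(E_\tau)\le 1$ for every stopping time $\tau$. *)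

theory Defs
  imports "HOL-Probability.Probability"
begin

definition nat_filtration ::
  "'o measure \<Rightarrow> 'z measure \<Rightarrow> (nat \<Rightarrow> 'o \<Rightarrow> 'z) \<Rightarrow> nat \<Rightarrow> 'o measure" where
  "nat_filtration M D Z n =
     sigma (space M) (\<Union>i\<in>{1..n}. {Z i -` A \<inter> space M | A. A \<in> sets D})"

definition supermartingale ::
  "'o measure \<Rightarrow> (nat \<Rightarrow> 'o measure) \<Rightarrow> (nat \<Rightarrow> 'o \<Rightarrow> real) \<Rightarrow> bool" where
  "supermartingale M F X \<longleftrightarrow>
     (\<forall>n. X n \<in> borel_measurable (F n) \<and> integrable M (X n) \<and>
          (AE x in M. real_cond_exp M (F n) (X (Suc n)) x \<le> X n x))"

definition e_process ::
  "'o measure \<Rightarrow> (nat \<Rightarrow> 'o measure) \<Rightarrow> (nat \<Rightarrow> 'o \<Rightarrow> real) \<Rightarrow> bool" where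
  "e_process M F E \<longleftrightarrow>
     (\<forall>n. \<forall>x\<in>space M. 0 \<le> E n x) \<and> supermartingale M F E \<and>
     (\<forall>\<tau> :: 'o \<Rightarrow> nat. stopping_time F \<tau> \<longrightarrow> (\<integral>\<^sup>+ x. ennreal (E (\<tau> x) x) \<partial>M) \<le> 1)"

definition emp_risk :: "('p \<Rightarrow> 'z \<Rightarrow> real) \<Rightarrow> (nat \<Rightarrow> 'o \<Rightarrow> 'z) \<Rightarrow> nat \<Rightarrow> 'o \<Rightarrow> 'p \<Rightarrow> real" where
  "emp_risk loss Z n x \<theta> = (\<Sum>i=1..n. loss \<theta> (Z i x)) / real n"

definition is_AERM ::
  "'o measure \<Rightarrow> 'z measure \<Rightarrow> 'p measure \<Rightarrow> 'p set \<Rightarrow> ('p \<Rightarrow> 'z \<Rightarrow> real) \<Rightarrow>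
   (nat \<Rightarrow> 'o \<Rightarrow> 'z) \<Rightarrow> (nat \<Rightarrow> 'o \<Rightarrow> 'p) \<Rightarrow> bool" where
  "is_AERM M D P \<Theta> loss Z thhat \<longleftrightarrow>
     (\<exists>\<epsilon> \<delta>::real. 0 \<le> \<epsilon> \<and> 0 \<le> \<delta> \<and>
       (\<forall>k\<ge>1. thhat k \<in> measurable (nat_filtration M D Z k) P \<and>
         (\<forall>x\<in>space M. thhat k x \<in> \<Theta> \<and>
            emp_risk loss Z k x (thhat k x)
              \<le> (INF \<theta>\<in>\<Theta>. emp_risk loss Z k x \<theta>) + \<delta> / real k powr (1 + \<epsilon>))))"

definition G_on ::
  "real \<Rightarrow> ('p \<Rightarrow> 'z \<Rightarrow> real) \<Rightarrow> (nat \<Rightarrow> 'o \<Rightarrow> 'z) \<Rightarrow> (nat \<Rightarrow> 'o \<Rightarrow> 'p) \<Rightarrow> 'p \<Rightarrow> nat \<Rightarrow> 'o \<Rightarrow> real" where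
  "G_on \<omega> loss Z thhat \<theta> n x =
     exp (- \<omega> * (\<Sum>i=1..n. loss (thhat (i - 1) x) (Z i x) - loss \<theta> (Z i x)))"

end

theory Submission
  imports Defs
begin

text \<open>
  The process is a product \<open>G n = h 1 * \<dots> * h n\<close> of the factors
  \<open>h i = exp (- \<omega> * (loss (thhat (i - 1)) (Z i) - loss \<theta>star (Z i)))\<close>.
  Since \<open>thhat (i - 1)\<close> depends only on \<open>Z 1, \<dots>, Z (i - 1)\<close>,
  and \<open>Z i\<close> is independent of these with law \<open>D\<close>, integrating out
  \<open>Z i\<close> with the past frozen and applying the strong central condition at the
  frozen parameter shows that \<open>h i\<close> has conditional mean at most 1. Hence \<open>G\<close>
  is a non-negative supermartingale with \<open>G 0 = 1\<close>, and optional stopping for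
  non-negative supermartingales, which needs no bound on the stopping time, gives
  \<open>E (G \<tau>) \<le> 1\<close>.
\<close>

lemma sets_nat_filtration:
  "sets (nat_filtration M D Z n) =
     sigma_sets (space M) (\<Union>i\<in>{1..n}. {Z i -` A \<inter> space M | A. A \<in> sets D})"
  unfolding nat_filtration_def by (rule sets_measure_of) blast

lemma space_nat_filtration [simp]: "space (nat_filtration M D Z n) = space M"
  unfolding nat_filtration_def by (rule space_measure_of) blast

lemma sets_nat_filtration_mono:
  "m \<le> n \<Longrightarrow> sets (nat_filtration M D Z m) \<subseteq> sets (nat_filtration M D Z n)"
  unfolding sets_nat_filtration by (intro sigma_sets_mono' UN_mono) auto

lemma subalgebra_nat_filtration:
  assumes "\<And>i. i \<in> {1..n} \<Longrightarrow> Z i \<in> measurable M D"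
  shows "subalgebra M (nat_filtration M D Z n)"
  unfolding subalgebra_def sets_nat_filtration
  using assms by (auto intro!: sets.sigma_sets_subset)

lemma measurable_nat_filtration:
  assumes "i \<in> {1..n}" and "Z i \<in> measurable M D"
  shows "Z i \<in> measurable (nat_filtration M D Z n) D"
proof (rule measurableI)
  show "Z i x \<in> space D" if "x \<in> space (nat_filtration M D Z n)" for x
    using that measurable_space[OF assms(2)] by simp
  show "Z i -` A \<inter> space (nat_filtration M D Z n) \<in> sets (nat_filtration M D Z n)"
    if "A \<in> sets D" for A
    using that assms(1) unfolding sets_nat_filtration space_nat_filtration
    by (intro sigma_sets.Basic) blast
qed

lemma (in prob_space) indep_set_nat_filtration_next:
  assumes indep: "indep_vars (\<lambda>_. D) Z {1..}"
  shows "indep_set (sets (nat_filtration M D Z n)) {Z (Suc n) -` A \<inter> space M | A. A \<in> sets D}"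
proof -
  define E where "E i = {Z i -` A \<inter> space M | A. A \<in> sets D}" for i
  define I where "I b = (if b then {1..n} else {Suc n})" for b
  have collect: "indep_sets (\<lambda>b. sigma_sets (space M) (\<Union>i\<in>I b. E i)) UNIV"
  proof (rule indep_sets_collect_sigma)
    have "indep_sets E {1..}"
      using indep unfolding indep_vars_def2 E_def by blast
    then show "indep_sets E (\<Union>b\<in>UNIV. I b)"
      by (rule indep_sets_mono_index[rotated]) (auto simp: I_def)
    show "Int_stable (E i)" for i
      unfolding E_def
    proof (safe intro!: Int_stableI)
      fix A B assume "A \<in> sets D" "B \<in> sets D"
      then show "\<exists>C. (Z i -` A \<inter> space M) \<inter> (Z i -` B \<inter> space M) = Z i -` C \<inter> space M \<and> C \<in> sets D"
        by (intro exI[of _ "A \<inter> B"]) auto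
    qed
    show "disjoint_family_on I UNIV"
      unfolding disjoint_family_on_def I_def by auto
  qed
  show ?thesis
    unfolding indep_set_def
    by (rule indep_sets_mono_sets[OF collect]) (auto simp: sets_nat_filtration I_def E_def split: bool.split)
qed

lemma (in prob_space) distr_pair_indep_set:
  assumes N: "subalgebra M N" and Y: "Y \<in> measurable M D"
    and indep: "indep_set (sets N) {Y -` B \<inter> space M | B. B \<in> sets D}"
  shows "distr M N (\<lambda>x. x) \<Otimes>\<^sub>M distr M D Y = distr M (N \<Otimes>\<^sub>M D) (\<lambda>x. (x, Y x))"
proof -
  have id: "(\<lambda>x. x) \<in> measurable M N"
    using N by (intro measurableI) (auto simp: subalgebra_def)
  interpret X: prob_space "distr M N (\<lambda>x. x)"
    by (rule prob_space_distr[OF id])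
  interpret Y: prob_space "distr M D Y"
    by (rule prob_space_distr[OF Y])
  show ?thesis
  proof (rule pair_measure_eqI)
    show "sigma_finite_measure (distr M N (\<lambda>x. x))" "sigma_finite_measure (distr M D Y)" ..
    show "sets (distr M N (\<lambda>x. x) \<Otimes>\<^sub>M distr M D Y) = sets (distr M (N \<Otimes>\<^sub>M D) (\<lambda>x. (x, Y x)))"
      by (simp add: sets_pair_measure_cong[OF sets_distr sets_distr])
  next
    fix A B assume "A \<in> sets (distr M N (\<lambda>x. x))" and "B \<in> sets (distr M D Y)"
    then have A: "A \<in> sets N" and B: "B \<in> sets D"
      by simp_all
    then have "A \<in> sets M"
      using N by (auto simp: subalgebra_def)
    have "emeasure (distr M (N \<Otimes>\<^sub>M D) (\<lambda>x. (x, Y x))) (A \<times> B)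
        = emeasure M (A \<inter> (Y -` B \<inter> space M))"
    proof -
      have "(\<lambda>x. (x, Y x)) -` (A \<times> B) \<inter> space M = A \<inter> (Y -` B \<inter> space M)"
        using sets.sets_into_space[OF \<open>A \<in> sets M\<close>] by auto
      then show ?thesis
        using A B id Y by (subst emeasure_distr) (auto intro: measurable_Pair)
    qed
    also have "\<dots> = emeasure M A * emeasure M (Y -` B \<inter> space M)"
    proof -
      have "prob (A \<inter> (Y -` B \<inter> space M)) = prob A * prob (Y -` B \<inter> space M)"
        using B by (intro indep_setD[OF indep A]) blast
      then show ?thesis
        by (simp add: emeasure_eq_measure ennreal_mult)
    qed
    also have "\<dots> = emeasure (distr M N (\<lambda>x. x)) A * emeasure (distr M D Y) B"
      using A B sets.sets_into_space[OF \<open>A \<in> sets M\<close>] id Y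
      by (simp add: emeasure_distr Int_absorb2)
    finally show "emeasure (distr M N (\<lambda>x. x)) A * emeasure (distr M D Y) B
        = emeasure (distr M (N \<Otimes>\<^sub>M D) (\<lambda>x. (x, Y x))) (A \<times> B)" ..
  qed
qed

lemma (in prob_space) nn_integral_indep_set_pair:
  assumes N: "subalgebra M N" and Y: "Y \<in> measurable M D"
    and indep: "indep_set (sets N) {Y -` B \<inter> space M | B. B \<in> sets D}"
    and g: "g \<in> borel_measurable (N \<Otimes>\<^sub>M D)"
  shows "(\<integral>\<^sup>+x. g (x, Y x) \<partial>M) = (\<integral>\<^sup>+x. \<integral>\<^sup>+y. g (x, y) \<partial>distr M D Y \<partial>M)"
proof -
  have id: "(\<lambda>x. x) \<in> measurable M N"
    using N by (intro measurableI) (auto simp: subalgebra_def)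
  interpret Y: prob_space "distr M D Y"
    by (rule prob_space_distr[OF Y])
  have g': "g \<in> borel_measurable (N \<Otimes>\<^sub>M distr M D Y)"
    using g by (subst measurable_cong_sets[OF sets_pair_measure_cong[OF refl sets_distr] refl])
  have "(\<integral>\<^sup>+x. g (x, Y x) \<partial>M) = (\<integral>\<^sup>+p. g p \<partial>distr M (N \<Otimes>\<^sub>M D) (\<lambda>x. (x, Y x)))"
    using id Y g by (intro nn_integral_distr[symmetric] measurable_Pair) auto
  also have "\<dots> = (\<integral>\<^sup>+p. g p \<partial>(distr M N (\<lambda>x. x) \<Otimes>\<^sub>M distr M D Y))"
    by (simp only: distr_pair_indep_set[OF N Y indep])
  also have "\<dots> = (\<integral>\<^sup>+x. \<integral>\<^sup>+y. g (x, y) \<partial>distr M D Y \<partial>distr M N (\<lambda>x. x))"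
    using g' by (intro Y.nn_integral_fst[symmetric])
       (subst measurable_cong_sets[OF sets_pair_measure_cong[OF sets_distr refl] refl])
  also have "\<dots> = (\<integral>\<^sup>+x. \<integral>\<^sup>+y. g (x, y) \<partial>distr M D Y \<partial>M)"
    using id Y.borel_measurable_nn_integral_fst[OF g'] by (intro nn_integral_distr) auto
  finally show ?thesis .
qed

lemma (in sigma_finite_subalgebra) real_cond_exp_le_of_set_integral_le:
  fixes f g :: "'a \<Rightarrow> real"
  assumes f: "integrable M f" and g: "integrable M g" "g \<in> borel_measurable F"
    and le: "\<And>A. A \<in> sets F \<Longrightarrow> (\<integral>x\<in>A. f x \<partial>M) \<le> (\<integral>x\<in>A. g x \<partial>M)"
  shows "AE x in M. real_cond_exp M F f x \<le> g x"
proof -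
  define d where "d x = g x - real_cond_exp M F f x" for x
  have d_meas: "d \<in> borel_measurable F"
    unfolding d_def using g(2) by measurable
  have "integrable M d"
    unfolding d_def using f g by (intro Bochner_Integration.integrable_diff real_cond_exp_int)
  then have d_int: "integrable (restr_to_subalg M F) d"
    using d_meas by (intro integrable_in_subalg subalg)
  have "0 \<le> (\<integral>x\<in>A. d x \<partial>restr_to_subalg M F)" if A: "A \<in> sets F" for A
  proof -
    have "(\<integral>x\<in>A. d x \<partial>restr_to_subalg M F) = (\<integral>x\<in>A. d x \<partial>M)"
      unfolding set_lebesgue_integral_def
      by (intro integral_subalgebra2 subalg borel_measurable_scaleR borel_measurable_indicator A d_meas)
    also have "\<dots> = (\<integral>x\<in>A. g x \<partial>M) - (\<integral>x\<in>A. f x \<partial>M)"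
    proof -
      have "A \<in> sets M"
        using A subalg by (auto simp: subalgebra_def)
      then have "set_integrable M A h" if "integrable M h" for h :: "'a \<Rightarrow> real"
        unfolding set_integrable_def using that by (rule integrable_mult_indicator)
      then show ?thesis
        unfolding d_def real_cond_exp_intA[OF f A] using f g(1)
        by (intro set_integral_diff(2)) auto
    qed
    finally show ?thesis using le[OF A] by simp
  qed
  then have "AE x in restr_to_subalg M F. 0 \<le> d x"
    by (rule sigma_finite_measure.density_nonneg[OF sigma_fin_subalg d_int]) (simp add: sets_restr_to_subalg[OF subalg])
  then have "AE x in M. 0 \<le> d x"
    by (rule AE_restr_to_subalg[OF subalg])
  then show ?thesis
    unfolding d_def by simp
qed

lemma nn_integral_stopped_eq_suminf:
  fixes X :: "nat \<Rightarrow> 'a \<Rightarrow> ennreal"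
  assumes X: "\<And>n. X n \<in> borel_measurable M"
    and \<tau>: "\<And>k. {x \<in> space M. \<tau> x = k} \<in> sets M"
  shows "(\<integral>\<^sup>+x. X (\<tau> x) x \<partial>M) = (\<Sum>k. \<integral>\<^sup>+x\<in>{x \<in> space M. \<tau> x = k}. X k x \<partial>M)"
proof -
  have "(\<integral>\<^sup>+x. X (\<tau> x) x \<partial>M)
      = (\<integral>\<^sup>+x. (\<Sum>k. X k x * indicator {x \<in> space M. \<tau> x = k} x) \<partial>M)"
  proof (intro nn_integral_cong sums_unique)
    fix x assume "x \<in> space M"
    then have "(\<lambda>k. X k x * indicator {x \<in> space M. \<tau> x = k} x) = (\<lambda>k. if k = \<tau> x then X k x else 0)"
      by auto
    then show "(\<lambda>k. X k x * indicator {x \<in> space M. \<tau> x = k} x) sums X (\<tau> x) x"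
      using sums_single[of "\<tau> x" "\<lambda>k. X k x"] by simp
  qed
  also have "\<dots> = (\<Sum>k. \<integral>\<^sup>+x\<in>{x \<in> space M. \<tau> x = k}. X k x \<partial>M)"
    using X \<tau> by (intro nn_integral_suminf) auto
  finally show ?thesis .
qed

lemma
  assumes \<tau>: "stopping_time F \<tau>" and F: "\<And>n. subalgebra M (F n)"
  shows stopping_time_Suc_le_sets: "{x \<in> space M. Suc k \<le> \<tau> x} \<in> sets (F k)"
    and stopping_time_le_sets: "{x \<in> space M. k \<le> \<tau> x} \<in> sets M"
    and stopping_time_eq_sets: "{x \<in> space M. \<tau> x = k} \<in> sets M"
proof -
  show Suc_le: "{x \<in> space M. Suc k \<le> \<tau> x} \<in> sets (F k)" for k
    using stopping_timeD2[OF \<tau>, of k] F[of k]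
    unfolding pred_def subalgebra_def by (simp add: Suc_le_eq)
  show le: "{x \<in> space M. k \<le> \<tau> x} \<in> sets M" for k
  proof (cases k)
    case (Suc m)
    then show ?thesis
      using Suc_le[of m] F[of m] by (auto simp: subalgebra_def)
  qed simp
  have "{x \<in> space M. \<tau> x = k} = {x \<in> space M. k \<le> \<tau> x} - {x \<in> space M. Suc k \<le> \<tau> x}"
    by auto
  then show "{x \<in> space M. \<tau> x = k} \<in> sets M"
    using le by simp
qed

lemma nn_integral_stopped_le:
  fixes X :: "nat \<Rightarrow> 'a \<Rightarrow> ennreal"
  assumes \<tau>: "stopping_time F \<tau>"
    and F: "\<And>n. subalgebra M (F n)"
    and X: "\<And>n. X n \<in> borel_measurable M"
    and super: "\<And>n A. A \<in> sets (F n) \<Longrightarrow>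
      (\<integral>\<^sup>+x\<in>A. X (Suc n) x \<partial>M) \<le> (\<integral>\<^sup>+x\<in>A. X n x \<partial>M)"
  shows "(\<integral>\<^sup>+x. X (\<tau> x) x \<partial>M) \<le> (\<integral>\<^sup>+x. X 0 x \<partial>M)"
proof -
  define running where "running k = {x \<in> space M. k \<le> \<tau> x}" for k
  define stops_at where "stops_at k = {x \<in> space M. \<tau> x = k}" for k
  define a where "a k = (\<integral>\<^sup>+x\<in>running k. X k x \<partial>M)" for k
  define b where "b k = (\<integral>\<^sup>+x\<in>stops_at k. X k x \<partial>M)" for k
  have running_Suc: "running (Suc k) \<in> sets (F k)" for k
    unfolding running_def by (rule stopping_time_Suc_le_sets[OF \<tau> F])
  have running_sets: "running k \<in> sets M" and stops_at_sets: "stops_at k \<in> sets M" for k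
    unfolding running_def stops_at_def
    by (rule stopping_time_le_sets[OF \<tau> F], rule stopping_time_eq_sets[OF \<tau> F])
  have b_a_le: "b k + a (Suc k) \<le> a k" for k
  proof -
    have "a k = (\<integral>\<^sup>+x. X k x * indicator (stops_at k) x + X k x * indicator (running (Suc k)) x \<partial>M)"
      unfolding a_def
      by (intro nn_integral_cong) (simp add: stops_at_def running_def split: split_indicator)
    also have "\<dots> = b k + (\<integral>\<^sup>+x\<in>running (Suc k). X k x \<partial>M)"
      unfolding b_def using X stops_at_sets running_sets by (intro nn_integral_add) auto
    also have "\<dots> \<ge> b k + a (Suc k)"
      unfolding a_def by (intro add_left_mono super running_Suc)
    finally show ?thesis .
  qed
  have partial: "(\<Sum>j<k. b j) + a k \<le> (\<integral>\<^sup>+x. X 0 x \<partial>M)" for k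
  proof (induction k)
    case 0
    have "a 0 = (\<integral>\<^sup>+x. X 0 x \<partial>M)"
      unfolding a_def running_def by (intro nn_integral_cong) simp
    then show ?case
      by simp
  next
    case (Suc k)
    have "(\<Sum>j<Suc k. b j) + a (Suc k) = (\<Sum>j<k. b j) + (b k + a (Suc k))"
      by (simp add: add.assoc)
    also have "\<dots> \<le> (\<Sum>j<k. b j) + a k"
      by (intro add_left_mono b_a_le)
    finally show ?case
      using Suc.IH by (rule order_trans)
  qed
  have "(\<integral>\<^sup>+x. X (\<tau> x) x \<partial>M) = (\<Sum>j. b j)"
    unfolding b_def stops_at_def
    by (rule nn_integral_stopped_eq_suminf[OF X stops_at_sets[unfolded stops_at_def]])
  also have "\<dots> \<le> (\<integral>\<^sup>+x. X 0 x \<partial>M)"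
  proof (rule suminf_le_const)
    show "summable b"
      by (rule summableI)
    show "(\<Sum>j<k. b j) \<le> (\<integral>\<^sup>+x. X 0 x \<partial>M)" for k
      using partial[of k] by (rule order_trans[rotated]) simp
  qed
  finally show ?thesis .
qed

lemma G_on_nonneg: "0 \<le> G_on \<omega> loss Z thhat \<theta> n x"
  unfolding G_on_def by simp

locale online_e_value = M: prob_space M + D: prob_space D
  for M :: "'o measure" and D :: "'z measure" +
  fixes P :: "'p measure" and loss :: "'p \<Rightarrow> 'z \<Rightarrow> real"
    and Z :: "nat \<Rightarrow> 'o \<Rightarrow> 'z" and thhat :: "nat \<Rightarrow> 'o \<Rightarrow> 'p"
    and \<theta>star :: 'p and \<omega> :: real
  assumes Z_indep: "M.indep_vars (\<lambda>_. D) Z {1..}"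
    and Z_distr: "\<And>i. i \<ge> 1 \<Longrightarrow> distr M D (Z i) = D"
    and loss_meas: "(\<lambda>(\<theta>, z). loss \<theta> z) \<in> borel_measurable (P \<Otimes>\<^sub>M D)"
    and star_in: "\<theta>star \<in> space P"
    and central: "\<And>\<theta>. \<theta> \<in> space P \<Longrightarrow>
        (\<integral>\<^sup>+ z. ennreal (exp (- \<omega> * (loss \<theta> z - loss \<theta>star z))) \<partial>D) \<le> 1"
    and thhat_meas: "\<And>k. thhat k \<in> measurable (nat_filtration M D Z k) P"
begin

abbreviation "F \<equiv> nat_filtration M D Z"
abbreviation "G \<equiv> G_on \<omega> loss Z thhat \<theta>star"

definition e_value :: "'p \<Rightarrow> 'z \<Rightarrow> real" where
  "e_value \<theta> z = exp (- \<omega> * (loss \<theta> z - loss \<theta>star z))"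

lemma G_on_Suc: "G (Suc n) x = G n x * e_value (thhat n x) (Z (Suc n) x)"
  unfolding G_on_def e_value_def by (simp add: sum.cl_ivl_Suc ring_distribs exp_add[symmetric])

lemma Z_measurable: "1 \<le> i \<Longrightarrow> Z i \<in> measurable M D"
  using Z_indep unfolding M.indep_vars_def2 by auto

lemma subalgebra_F: "subalgebra M (F n)"
  by (rule subalgebra_nat_filtration) (simp add: Z_measurable)

lemma measurable_loss:
  "f \<in> measurable N P \<Longrightarrow> g \<in> measurable N D \<Longrightarrow> (\<lambda>x. loss (f x) (g x)) \<in> borel_measurable N"
  by (rule measurable_Pair_compose_split[OF loss_meas])

lemma measurable_e_value:
  assumes "f \<in> measurable N P" and "g \<in> measurable N D"
  shows "(\<lambda>x. e_value (f x) (g x)) \<in> borel_measurable N"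
proof -
  note [measurable] = measurable_loss[OF assms] measurable_loss[OF measurable_const[OF star_in] assms(2)]
  show ?thesis
    unfolding e_value_def by measurable
qed

lemma measurable_thhat_F: "k \<le> n \<Longrightarrow> thhat k \<in> measurable (F n) P"
  using thhat_meas[of k] sets_nat_filtration_mono[of k n]
  by (metis measurable_from_subalg space_nat_filtration subalgebra_def)

lemma G_on_measurable: "G n \<in> borel_measurable (F n)"
proof -
  have "(\<lambda>x. loss (thhat (i - 1) x) (Z i x) - loss \<theta>star (Z i x)) \<in> borel_measurable (F n)"
    if "i \<in> {1..n}" for i
    using that star_in
    by (intro borel_measurable_diff measurable_loss measurable_const measurable_thhat_F
        measurable_nat_filtration Z_measurable) auto
  then show ?thesis
    unfolding G_on_def by measurable
qed

lemma set_nn_integral_G_on_Suc_le: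
  assumes A: "A \<in> sets (F n)"
  shows "(\<integral>\<^sup>+x\<in>A. G (Suc n) x \<partial>M) \<le> (\<integral>\<^sup>+x\<in>A. G n x \<partial>M)"
proof -
  define g where "g p = ennreal (G n (fst p)) * indicator A (fst p) * e_value (thhat n (fst p)) (snd p)"
    for p
  have g_meas: "g \<in> borel_measurable (F n \<Otimes>\<^sub>M D)"
  proof -
    note [measurable] = A G_on_measurable[of n]
      measurable_e_value[OF measurable_compose[OF measurable_fst thhat_meas] measurable_snd]
    show ?thesis
      unfolding g_def by measurable
  qed
  have "(\<integral>\<^sup>+x\<in>A. G (Suc n) x \<partial>M) = (\<integral>\<^sup>+x. g (x, Z (Suc n) x) \<partial>M)"
    by (intro nn_integral_cong) (simp add: g_def G_on_Suc G_on_nonneg ennreal_mult' mult_ac)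
  also have "\<dots> = (\<integral>\<^sup>+x. \<integral>\<^sup>+z. g (x, z) \<partial>D \<partial>M)"
    using M.nn_integral_indep_set_pair[OF subalgebra_F Z_measurable
        M.indep_set_nat_filtration_next[OF Z_indep] g_meas]
    by (simp add: Z_distr)
  also have "\<dots> \<le> (\<integral>\<^sup>+x\<in>A. G n x \<partial>M)"
  proof (intro nn_integral_mono)
    fix x assume "x \<in> space M"
    then have "thhat n x \<in> space P"
      using measurable_space[OF thhat_meas] by simp
    then have "(\<integral>\<^sup>+z. g (x, z) \<partial>D)
        = ennreal (G n x) * indicator A x * (\<integral>\<^sup>+z. e_value (thhat n x) z \<partial>D)"
      unfolding g_def prod.sel
      by (intro nn_integral_cmult measurable_compose[OF _ measurable_ennreal]
          measurable_e_value[OF measurable_const measurable_ident_sets[OF refl]])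
    also have "\<dots> \<le> ennreal (G n x) * indicator A x * 1"
      using central[OF \<open>thhat n x \<in> space P\<close>] unfolding e_value_def by (intro mult_left_mono) auto
    finally show "(\<integral>\<^sup>+z. g (x, z) \<partial>D) \<le> ennreal (G n x) * indicator A x"
      by simp
  qed
  finally show ?thesis .
qed

lemma nn_integral_stopped_G_on_le_1:
  assumes "stopping_time F \<tau>"
  shows "(\<integral>\<^sup>+x. ennreal (G (\<tau> x) x) \<partial>M) \<le> 1"
proof -
  have "(\<integral>\<^sup>+x. ennreal (G (\<tau> x) x) \<partial>M) \<le> (\<integral>\<^sup>+x. ennreal (G 0 x) \<partial>M)"
  proof (rule nn_integral_stopped_le[OF assms subalgebra_F])
    show "(\<lambda>x. ennreal (G n x)) \<in> borel_measurable M" for n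
      using measurable_from_subalg[OF subalgebra_F G_on_measurable] by measurable
  qed (rule set_nn_integral_G_on_Suc_le)
  also have "\<dots> = 1"
    by (simp add: G_on_def M.emeasure_space_1)
  finally show ?thesis .
qed

lemma integrable_G_on: "integrable M (G n)"
proof (rule integrableI_nonneg)
  show "G n \<in> borel_measurable M"
    by (rule measurable_from_subalg[OF subalgebra_F G_on_measurable])
  show "AE x in M. 0 \<le> G n x"
    by (simp add: G_on_nonneg)
  have "(\<integral>\<^sup>+x. ennreal (G n x) \<partial>M) \<le> 1"
    using nn_integral_stopped_G_on_le_1[OF stopping_time_const] .
  then show "(\<integral>\<^sup>+x. ennreal (G n x) \<partial>M) < \<infinity>"
    by (simp add: order_le_less_trans)
qed

lemma supermartingale_G_on: "supermartingale M F G"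
  unfolding supermartingale_def
proof (intro allI conjI)
  fix n
  interpret sigma_finite_subalgebra M "F n"
    by (intro finite_measure_subalgebra_is_sigma_finite)
      (simp add: finite_measure_subalgebra_def finite_measure_subalgebra_axioms_def subalgebra_F
        M.finite_measure_axioms)
  show "G n \<in> borel_measurable (F n)" "integrable M (G n)"
    by (rule G_on_measurable, rule integrable_G_on)
  show "AE x in M. real_cond_exp M (F n) (G (Suc n)) x \<le> G n x"
  proof (rule real_cond_exp_le_of_set_integral_le[OF integrable_G_on integrable_G_on G_on_measurable])
    fix A assume A: "A \<in> sets (F n)"
    then have "A \<in> sets M"
      using subalgebra_F by (auto simp: subalgebra_def)
    then have "ennreal (\<integral>x\<in>A. G m x \<partial>M) = (\<integral>\<^sup>+x\<in>A. G m x \<partial>M)" for m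
      by (intro nn_set_integral_eq_set_integral[symmetric] integrable_G_on) (simp_all add: G_on_nonneg)
    then have "ennreal (\<integral>x\<in>A. G (Suc n) x \<partial>M) \<le> ennreal (\<integral>x\<in>A. G n x \<partial>M)"
      using set_nn_integral_G_on_Suc_le[OF A] by simp
    moreover have "0 \<le> (\<integral>x\<in>A. G n x \<partial>M)"
      unfolding set_lebesgue_integral_def by (intro Bochner_Integration.integral_nonneg) (simp add: G_on_nonneg)
    ultimately show "(\<integral>x\<in>A. G (Suc n) x \<partial>M) \<le> (\<integral>x\<in>A. G n x \<partial>M)"
      by simp
  qed
qed

lemma e_process_G_on: "e_process M F G"
  unfolding e_process_def
  by (simp add: G_on_nonneg supermartingale_G_on nn_integral_stopped_G_on_le_1)

end

theorem lemma1:
  fixes M :: "'o measure" and D :: "'z measure" and P :: "'p measure"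
    and \<Theta> :: "'p set" and loss :: "'p \<Rightarrow> 'z \<Rightarrow> real"
    and Z :: "nat \<Rightarrow> 'o \<Rightarrow> 'z" and thhat :: "nat \<Rightarrow> 'o \<Rightarrow> 'p"
    and \<theta>star \<theta>0 :: 'p and \<omega>bar \<omega> :: real
  assumes "prob_space M" and "prob_space D"
    and Z_meas: "\<And>i. i \<ge> 1 \<Longrightarrow> Z i \<in> measurable M D"
    and Z_distr: "\<And>i. i \<ge> 1 \<Longrightarrow> distr M D (Z i) = D"
    and Z_indep: "prob_space.indep_vars M (\<lambda>_. D) Z {1..}"
    and "space P = \<Theta>"
    and loss_meas: "(\<lambda>(\<theta>, z). loss \<theta> z) \<in> borel_measurable (P \<Otimes>\<^sub>M D)"
    and loss_nonneg: "\<And>\<theta> z. \<theta> \<in> \<Theta> \<Longrightarrow> z \<in> space D \<Longrightarrow> 0 \<le> loss \<theta> z"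
    and star_in: "\<theta>star \<in> \<Theta>"
    and star_min: "\<And>\<theta>. \<theta> \<in> \<Theta> \<Longrightarrow>
        (\<integral>\<^sup>+ z. ennreal (loss \<theta>star z) \<partial>D) \<le> (\<integral>\<^sup>+ z. ennreal (loss \<theta> z) \<partial>D)"
    and "\<omega>bar > 0"
    and central: "\<And>\<theta> w. \<theta> \<in> \<Theta> \<Longrightarrow> 0 \<le> w \<Longrightarrow> w < \<omega>bar \<Longrightarrow>
        (\<integral>\<^sup>+ z. ennreal (exp (- w * (loss \<theta> z - loss \<theta>star z))) \<partial>D) \<le> 1"
    and aerm: "is_AERM M D P \<Theta> loss Z thhat"
    and "\<theta>0 \<in> \<Theta>" and "\<And>x. thhat 0 x = \<theta>0"
    and "0 \<le> \<omega>" and "\<omega> < \<omega>bar"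
  shows "e_process M (nat_filtration M D Z) (G_on \<omega> loss Z thhat \<theta>star)"
proof -
  have thhat_meas: "thhat k \<in> measurable (nat_filtration M D Z k) P" for k
  proof (cases "k = 0")
    case True
    then have "thhat k = (\<lambda>x. \<theta>0)"
      using \<open>\<And>x. thhat 0 x = \<theta>0\<close> by auto
    then show ?thesis
      using \<open>\<theta>0 \<in> \<Theta>\<close> \<open>space P = \<Theta>\<close> by simp
  next
    case False
    then show ?thesis
      using aerm unfolding is_AERM_def by auto
  qed
  interpret online_e_value M D P loss Z thhat \<theta>star \<omega>
    using \<open>prob_space M\<close> \<open>prob_space D\<close> Z_indep Z_distr loss_meas thhat_meas star_in
      central \<open>0 \<le> \<omega>\<close> \<open>\<omega> < \<omega>bar\<close> \<open>space P = \<Theta>\<close>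
    by (simp add: online_e_value_def online_e_value_axioms_def)
  show ?thesis
    by (rule e_process_G_on)
qed

end
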